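(* Let $\bm{G}_t\in\mathbb{R}^{n_1\times n_2}$, $\epsilon_t>0$, $\bm{L}_t=\epsilon_t\bm{I}_{n_1}+\mathrm{diag}(\bm{G}_t\bm{G}_t^T)$, $\bm{R}_t=\epsilon_t\bm{I}_{n_2}+\mathrm{diag}(\bm{G}_t^T\bm{G}_t)$, and let $\bm{X}_t,\bm{X}\in\mathbb{R}^{n_1\times n_2}$ be rank-$r$ matrices, $\bm{X}_t=\bm{U}_t\bm{\Sigma}_t\bm{V}_t^T$ a compact SVD. Let $\widetilde{\mathcal{P}}_{\mathbb{T}_t}$ be the orthogonal projector, with respect to $\langle\cdot,\cdot\rangle_{\mathcal{W}_t}$, onto $\mathbb{T}_t=\{\bm{U}_t\bm{Q}^T+\bm{P}\bm{V}_t^T:\bm{P}\in\mathbb{R}^{n_1\times r},\bm{Q}\in\mathbb{R}^{n_2\times r}\}$. Then $$\big\|(\mathcal{I}-\widetilde{\mathcal{P}}_{\mathbb{T}_t})\bm{X}\big\|_{\mathcal{W}_t}\le\frac{\mu_t^{5/4}}{\nu_t^{7/4}\,\sigma_{\min}(\bm{X})}\,\|\bm{X}-\bm{X}_t\|_{\mathcal{W}_t}^2,$$ where $\nu_t=\epsilon_t^{1/2}$ and $\mu_t=(\epsilon_t+\|\bm{G}_t\|_\vee^2)^{1/2}$.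
   Context: $\mathrm{diag}(\bm{M})$ keeps only the diagonal of $\bm{M}$. $\langle\bm{Z},\bm{Y}\rangle_{\mathcal{W}_t}=\langle\bm{L}_t^{1/4}\bm{Z}\bm{R}_t^{1/4},\bm{Y}\rangle$ with $\langle\bm{A},\bm{B}\rangle=\mathrm{trace}(\bm{A}^T\bm{B})$, and $\|\cdot\|_{\mathcal{W}_t}$ is the induced norm. $\mathcal{I}$ is the identity. $\|\bm{Z}\|_\vee=\max\{\max_i\|\bm{Z}(i,:)\|_2,\max_j\|\bm{Z}(:,j)\|_2\}$. $\sigma_{\min}(\bm{X})$ is the smallest nonzero singular value of $\bm{X}$. *)

theory Defs
  imports "HOL-Analysis.Analysis"
begin

text \<open>Matrices are real^'c^'r (rows indexed by 'r, columns by 'c).\<close>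

definition mdiag :: "real^'n^'n \<Rightarrow> real^'n^'n" where
  "mdiag M = (\<chi> i j. if i = j then M $ i $ i else 0)"

definition diag_powr :: "real^'n^'n \<Rightarrow> real \<Rightarrow> real^'n^'n" where
  "diag_powr M p = (\<chi> i j. if i = j then (M $ i $ i) powr p else 0)"

definition winner :: "real^'m^'m \<Rightarrow> real^'n^'n \<Rightarrow> real^'n^'m \<Rightarrow> real^'n^'m \<Rightarrow> real" where
  "winner L R Z Y = trace (transpose (diag_powr L (1/4) ** Z ** diag_powr R (1/4)) ** Y)"

definition wnorm :: "real^'m^'m \<Rightarrow> real^'n^'n \<Rightarrow> real^'n^'m \<Rightarrow> real" where
  "wnorm L R Z = sqrt (winner L R Z Z)"

definition wproj :: "real^'m^'m \<Rightarrow> real^'n^'n \<Rightarrow> (real^'n^'m) set \<Rightarrow> real^'n^'m \<Rightarrow> real^'n^'m" where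
  "wproj L R T Z = (THE Y. Y \<in> T \<and> (\<forall>W\<in>T. winner L R (Z - Y) W = 0))"

definition vee_norm :: "real^'n^'m \<Rightarrow> real" where
  "vee_norm Z = max (Max (range (\<lambda>i. norm (row i Z)))) (Max (range (\<lambda>j. norm (column j Z))))"

text \<open>Smallest nonzero singular value: singular values are the s > 0 with s^2 an
  eigenvalue of X^T X.\<close>
definition sigma_min :: "real^'n^'m \<Rightarrow> real" where
  "sigma_min X = Min {s. s > 0 \<and> (\<exists>v. v \<noteq> 0 \<and> (transpose X ** X) *v v = (s^2) *\<^sub>R v)}"

definition tangent_space :: "real^'r^'m \<Rightarrow> real^'r^'n \<Rightarrow> (real^'n^'m) set" where
  "tangent_space U V = {U ** transpose Q + P ** transpose V | P Q. True}"

end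

theory Submission
  imports Defs
begin

(* Let P = I - U U^T and Q = I - V V^T, and E = P X Q. Since X - E lies in the tangent space,
   the weighted projection residual is at most |E|_W <= mu^(1/2) |E|_F: the weights
   L_ii^(1/4) R_jj^(1/4) of the weighted inner product lie in [nu, mu]. Writing a column X q of
   X Q as X v with v in the row space of X, the matching column of E is (P X) v, and
   |X v| >= sigma_min(X) |v|; hence sigma_min(X) |E|_F <= |P X|_F |X Q|_F. As P X_t = 0 and
   X_t Q = 0, both factors are at most |X - X_t|_F <= |X - X_t|_W / nu^(1/2). This gives the
   constant mu^(1/2) / nu, which is at most mu^(5/4) / nu^(7/4).
   The lower bound |X v| >= sigma_min(X) |v| on the row space comes from a minimiser of the
   Rayleigh quotient of X^T X there, which is an eigenvector of X^T X. *)

section \<open>Frobenius norm of matrices\<close>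

lemma norm_matrix_power2:
  fixes A :: "real^'n^'m"
  shows "(norm A)\<^sup>2 = (\<Sum>i\<in>UNIV. \<Sum>j\<in>UNIV. (A $ i $ j)\<^sup>2)"
  unfolding power2_norm_eq_inner inner_vec_def inner_real_def by (simp add: power2_eq_square)

lemma norm_matrix_power2_columns:
  fixes A :: "real^'n^'m"
  shows "(norm A)\<^sup>2 = (\<Sum>j\<in>UNIV. (norm (column j A))\<^sup>2)"
  unfolding norm_matrix_power2 power2_norm_eq_inner inner_vec_def inner_real_def column_def
  by (subst sum.swap) (simp add: power2_eq_square)

lemma norm_transpose:
  fixes A :: "real^'n^'m"
  shows "norm (transpose A) = norm A"
proof (rule power2_eq_imp_eq)
  show "(norm (transpose A))\<^sup>2 = (norm A)\<^sup>2"
    unfolding norm_matrix_power2 transpose_def by (simp add: sum.swap[of "\<lambda>i j. (A $ j $ i)\<^sup>2"])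
qed simp_all

lemma column_matrix_mult: "column j (A ** B) = A *v column j B"
  by (simp add: vec_eq_iff column_def matrix_matrix_mult_def matrix_vector_mult_def)

lemma norm_matrix_vector_mult_le:
  fixes A :: "real^'n^'m"
  shows "norm (A *v x) \<le> norm A * norm x"
proof -
  have "norm (A *v x) = L2_set (\<lambda>i. \<bar>inner (A $ i) x\<bar>) UNIV"
    unfolding norm_vec_def[of "A *v x"] by (simp add: matrix_vector_mul_component)
  also have "\<dots> \<le> L2_set (\<lambda>i. norm (A $ i) * norm x) UNIV"
    by (intro L2_set_mono Cauchy_Schwarz_ineq2) simp
  also have "\<dots> = norm A * norm x"
    unfolding norm_vec_def[of A] by (simp add: L2_set_left_distrib)
  finally show ?thesis .
qed

lemma norm_le_by_columns:
  fixes A :: "real^'n^'m" and B :: "real^'n^'k"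
  assumes "0 \<le> c" and "\<And>j. norm (column j A) \<le> c * norm (column j B)"
  shows "norm A \<le> c * norm B"
proof (rule power2_le_imp_le)
  have "(norm A)\<^sup>2 \<le> (\<Sum>j\<in>UNIV. (c * norm (column j B))\<^sup>2)"
    unfolding norm_matrix_power2_columns by (intro sum_mono power_mono assms(2)) simp
  then show "(norm A)\<^sup>2 \<le> (c * norm B)\<^sup>2"
    by (simp add: norm_matrix_power2_columns[of B] power_mult_distrib sum_distrib_left)
qed (use assms in simp)

lemma norm_entrywise_scale_le:
  fixes Z :: "real^'n^'m"
  assumes "\<And>i j. \<bar>w i j\<bar> \<le> c"
  shows "norm (\<chi> i j. w i j * Z $ i $ j) \<le> c * norm Z"
proof (rule power2_le_imp_le)
  have "\<bar>w i j\<bar>\<^sup>2 \<le> c\<^sup>2" for i j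
    using assms[of i j] by (intro power_mono) auto
  then have "(w i j * Z $ i $ j)\<^sup>2 \<le> c\<^sup>2 * (Z $ i $ j)\<^sup>2" for i j
    by (simp add: power_mult_distrib mult_right_mono)
  then show "(norm (\<chi> i j. w i j * Z $ i $ j))\<^sup>2 \<le> (c * norm Z)\<^sup>2"
    unfolding norm_matrix_power2 power_mult_distrib[of c] by (simp add: sum_distrib_left sum_mono)
  have "0 \<le> c" using assms by (meson abs_ge_zero order_trans)
  then show "0 \<le> c * norm Z" by simp
qed

lemma norm_entrywise_scale_ge:
  fixes Z :: "real^'n^'m"
  assumes "0 \<le> c" and "\<And>i j. c \<le> \<bar>w i j\<bar>"
  shows "c * norm Z \<le> norm (\<chi> i j. w i j * Z $ i $ j)"
proof (rule power2_le_imp_le)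
  have "c\<^sup>2 \<le> \<bar>w i j\<bar>\<^sup>2" for i j
    using assms by (intro power_mono) auto
  then have "c\<^sup>2 * (Z $ i $ j)\<^sup>2 \<le> (w i j * Z $ i $ j)\<^sup>2" for i j
    by (simp add: power_mult_distrib mult_right_mono)
  then show "(c * norm Z)\<^sup>2 \<le> (norm (\<chi> i j. w i j * Z $ i $ j))\<^sup>2"
    unfolding norm_matrix_power2 power_mult_distrib[of c] by (simp add: sum_distrib_left sum_mono)
qed simp

section \<open>Matrix algebra and complementary projections\<close>

lemma transpose_add: "transpose (A + B) = transpose A + transpose (B :: 'a::semiring_1^'n^'m)"
  by (simp add: vec_eq_iff transpose_def)

lemma transpose_diff: "transpose (A - B) = transpose A - transpose (B :: 'a::ring_1^'n^'m)"
  by (simp add: vec_eq_iff transpose_def)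

lemma matrix_add_rdistrib: "(A + B) ** C = A ** C + B ** (C :: 'a::semiring_1^'n^'m)"
  by (simp add: vec_eq_iff matrix_matrix_mult_def sum.distrib distrib_right)

lemma matrix_diff_ldistrib: "A ** (B - C) = A ** B - A ** (C :: 'a::ring_1^'n^'m)"
  by (simp add: vec_eq_iff matrix_matrix_mult_def sum_subtractf right_diff_distrib)

lemma matrix_diff_rdistrib: "(A - B) ** C = A ** C - B ** (C :: 'a::ring_1^'n^'m)"
  by (simp add: vec_eq_iff matrix_matrix_mult_def sum_subtractf left_diff_distrib)

lemma matrix_mult_zero_right: "A ** 0 = (0 :: 'a::semiring_1^'n^'m)"
  by (simp add: vec_eq_iff matrix_matrix_mult_def)

lemma inner_matrix_vector_mult_transpose:
  fixes A :: "real^'n^'m"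
  shows "inner (A *v x) y = inner x (transpose A *v y)"
  by (metis dot_lmul_matrix inner_commute transpose_matrix_vector)

definition compl_proj :: "real^'r^'n \<Rightarrow> real^'n^'n" where
  "compl_proj U = mat 1 - U ** transpose U"

lemma transpose_compl_proj: "transpose (compl_proj U) = compl_proj U"
  by (simp add: compl_proj_def transpose_diff matrix_transpose_mul)

lemma compl_proj_mult_self:
  assumes "transpose U ** U = mat 1"
  shows "compl_proj U ** U = 0"
  by (simp add: compl_proj_def matrix_diff_rdistrib matrix_mul_assoc[symmetric] assms)

lemma transpose_mult_compl_proj:
  assumes "transpose U ** U = mat 1"
  shows "transpose U ** compl_proj U = 0"
  by (simp add: compl_proj_def matrix_diff_ldistrib matrix_mul_assoc assms)

lemma norm_compl_proj_vector_le:
  fixes U :: "real^'r^'n"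
  assumes "transpose U ** U = mat 1"
  shows "norm (compl_proj U *v a) \<le> norm a"
proof -
  define u where "u = transpose U *v a"
  define c where "c = U *v u"
  have split: "a = compl_proj U *v a + c"
    by (simp add: compl_proj_def c_def u_def matrix_vector_mult_diff_rdistrib
        matrix_vector_mul_assoc del: transpose_matrix_vector)
  have "inner c c = inner u u"
    unfolding c_def inner_matrix_vector_mult_transpose[of U u]
    by (simp add: matrix_vector_mul_assoc assms del: transpose_matrix_vector)
  moreover have "inner a c = inner u u"
    using inner_matrix_vector_mult_transpose[of U u a] by (simp add: c_def u_def inner_commute)
  ultimately have "orthogonal (compl_proj U *v a) c"
    using split by (metis add_diff_cancel_right' inner_diff_left orthogonal_def right_minus_eq)
  then have "(norm a)\<^sup>2 = (norm (compl_proj U *v a))\<^sup>2 + (norm c)\<^sup>2"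
    using split norm_add_Pythagorean by metis
  then have "(norm (compl_proj U *v a))\<^sup>2 \<le> (norm a)\<^sup>2" by simp
  then show ?thesis by (rule power2_le_imp_le) simp
qed

lemma norm_compl_proj_mult_le:
  fixes U :: "real^'r^'n" and A :: "real^'k^'n"
  assumes "transpose U ** U = mat 1"
  shows "norm (compl_proj U ** A) \<le> norm A"
  using norm_le_by_columns[of 1 "compl_proj U ** A" A] norm_compl_proj_vector_le[OF assms]
  by (simp add: column_matrix_mult)

lemma norm_mult_compl_proj_le:
  fixes V :: "real^'r^'n" and A :: "real^'n^'k"
  assumes "transpose V ** V = mat 1"
  shows "norm (A ** compl_proj V) \<le> norm A"
  using norm_compl_proj_mult_le[OF assms, of "transpose A"]
  by (metis matrix_transpose_mul norm_transpose transpose_compl_proj)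

section \<open>The smallest singular value\<close>

lemma transpose_mult_in_rowspace:
  fixes X :: "real^'n^'m"
  shows "transpose X *v y \<in> span (rows X)"
  using matrix_vector_mult_in_columnspace[of "transpose X" y] by (simp del: transpose_matrix_vector)

lemma rowspace_preimage:
  fixes X :: "real^'n^'m"
  obtains v where "v \<in> span (rows X)" and "X *v v = X *v q"
proof -
  obtain y z where y: "y \<in> span (rows X)" and z: "\<And>w. w \<in> span (rows X) \<Longrightarrow> orthogonal z w"
    and q: "q = y + z"
    using orthogonal_subspace_decomp_exists by blast
  have "X *v z = 0"
  proof -
    have "X $ i \<in> span (rows X)" for i
      by (rule span_base) (auto simp: rows_def row_def)
    then have "inner (X $ i) z = 0" for i
      using z by (metis orthogonal_def inner_commute)
    then show ?thesis by (simp add: vec_eq_iff matrix_vector_mul_component)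
  qed
  with q have "X *v y = X *v q" by (simp add: matrix_vector_right_distrib)
  with y that show ?thesis by blast
qed

lemma linear_coefficient_zero_if_quadratic_nonneg:
  fixes c g :: real
  assumes "\<And>t. 0 \<le> 2 * t * c + t\<^sup>2 * g"
  shows "c = 0"
proof (rule ccontr)
  assume "c \<noteq> 0"
  define k where "k = \<bar>g\<bar> + 1"
  have "k > 0" by (simp add: k_def add_nonneg_pos)
  define t where "t = - c / k"
  have "0 \<le> 2 * t * c + t\<^sup>2 * g" by (rule assms)
  also have "\<dots> \<le> 2 * t * c + t\<^sup>2 * k"
    unfolding k_def by (intro add_left_mono mult_left_mono) auto
  also have "\<dots> = - c\<^sup>2 / k"
    using \<open>k > 0\<close> by (simp add: t_def field_simps power2_eq_square)
  also have "\<dots> < 0" using \<open>c \<noteq> 0\<close> \<open>k > 0\<close> by simp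
  finally show False by simp
qed

lemma power2_norm_add_scaleR:
  fixes x y :: "'a::real_inner"
  shows "(norm (x + t *\<^sub>R y))\<^sup>2 = (norm x)\<^sup>2 + 2 * t * inner x y + t\<^sup>2 * (norm y)\<^sup>2"
  unfolding power2_norm_eq_inner
  by (simp add: inner_commute[of y x] power2_eq_square algebra_simps)

lemma rayleigh_minimizer_stationary:
  fixes f :: "'a::real_inner \<Rightarrow> 'b::real_inner"
  assumes "linear f" and "subspace S" and "a \<in> S" and "h \<in> S"
    and ge: "\<And>v. v \<in> S \<Longrightarrow> l * (norm v)\<^sup>2 \<le> (norm (f v))\<^sup>2"
    and eq: "(norm (f a))\<^sup>2 = l * (norm a)\<^sup>2"
  shows "inner (f a) (f h) = l * inner a h"
proof -
  have "0 \<le> 2 * t * (inner (f a) (f h) - l * inner a h) + t\<^sup>2 * ((norm (f h))\<^sup>2 - l * (norm h)\<^sup>2)"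
    for t
  proof -
    have "a + t *\<^sub>R h \<in> S" using assms(2-4) by (simp add: subspace_add subspace_scale)
    then have "l * (norm (a + t *\<^sub>R h))\<^sup>2 \<le> (norm (f a + t *\<^sub>R f h))\<^sup>2"
      using ge linear_add[OF assms(1)] linear_scale[OF assms(1)] by metis
    then show ?thesis
      unfolding power2_norm_add_scaleR using eq by (simp add: algebra_simps)
  qed
  then show ?thesis using linear_coefficient_zero_if_quadratic_nonneg by fastforce
qed

lemma rowspace_rayleigh_minimizer:
  fixes X :: "real^'n^'m"
  assumes "X \<noteq> 0"
  obtains a where "a \<in> span (rows X)" and "norm a = 1"
    and "\<And>v. v \<in> span (rows X) \<Longrightarrow> (norm (X *v a))\<^sup>2 * (norm v)\<^sup>2 \<le> (norm (X *v v))\<^sup>2"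
proof -
  define K where "K = span (rows X) \<inter> sphere 0 1"
  have "compact K"
    unfolding K_def by (intro closed_Int_compact closed_span compact_sphere)
  obtain i where "X $ i \<noteq> 0" using assms by (auto simp: vec_eq_iff)
  moreover have "X $ i \<in> span (rows X)"
    by (rule span_base) (auto simp: rows_def row_def)
  ultimately have "(1 / norm (X $ i)) *\<^sub>R X $ i \<in> K"
    by (simp add: K_def span_mul)
  then have "K \<noteq> {}" by blast
  moreover have "continuous_on K (\<lambda>v. (norm (X *v v))\<^sup>2)"
    by (intro continuous_intros linear_continuous_on matrix_vector_mul_bounded_linear)
  ultimately obtain a where "a \<in> K" and min: "\<And>u. u \<in> K \<Longrightarrow> (norm (X *v a))\<^sup>2 \<le> (norm (X *v u))\<^sup>2"
    using continuous_attains_inf[OF \<open>compact K\<close>] by metis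
  have opt: "(norm (X *v a))\<^sup>2 * (norm v)\<^sup>2 \<le> (norm (X *v v))\<^sup>2" if "v \<in> span (rows X)" for v
  proof (cases "v = 0")
    case False
    then have "(1 / norm v) *\<^sub>R v \<in> K" using that by (simp add: K_def span_mul)
    from min[OF this] False show ?thesis
      by (simp add: matrix_vector_mult_scaleR field_simps)
  qed simp
  show ?thesis using that[of a] \<open>a \<in> K\<close> opt by (simp add: K_def)
qed

lemma rowspace_rayleigh_eigenpair:
  fixes X :: "real^'n^'m"
  assumes "X \<noteq> 0"
  obtains a l where "a \<noteq> 0" and "(transpose X ** X) *v a = l *\<^sub>R a" and "0 < l"
    and "\<And>v. v \<in> span (rows X) \<Longrightarrow> l * (norm v)\<^sup>2 \<le> (norm (X *v v))\<^sup>2"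
proof -
  obtain a where a: "a \<in> span (rows X)" "norm a = 1"
    and min: "\<And>v. v \<in> span (rows X) \<Longrightarrow> (norm (X *v a))\<^sup>2 * (norm v)\<^sup>2 \<le> (norm (X *v v))\<^sup>2"
    using rowspace_rayleigh_minimizer[OF assms] by blast
  define l where "l = (norm (X *v a))\<^sup>2"
  have ge: "\<And>v. v \<in> span (rows X) \<Longrightarrow> l * (norm v)\<^sup>2 \<le> (norm (X *v v))\<^sup>2"
    using min by (simp add: l_def)
  define r where "r = (transpose X ** X) *v a - l *\<^sub>R a"
  have r_orth: "inner r h = 0" if "h \<in> span (rows X)" for h
  proof -
    have "inner (X *v a) (X *v h) = l * inner a h"
      by (rule rayleigh_minimizer_stationary[OF matrix_vector_mul_linear subspace_span a(1) that ge])
        (simp_all add: l_def a(2))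
    then show ?thesis
      unfolding r_def matrix_vector_mul_assoc[symmetric]
      by (simp add: inner_diff_left inner_matrix_vector_mult_transpose[of "transpose X"]
          del: transpose_matrix_vector)
  qed
  have "r \<in> span (rows X)"
    unfolding r_def matrix_vector_mul_assoc[symmetric]
    by (intro span_diff span_mul a(1) transpose_mult_in_rowspace)
  then have "r = 0" using r_orth inner_eq_zero_iff by blast
  then have "(transpose X ** X) *v a = l *\<^sub>R a" by (simp add: r_def)
  moreover have "a \<noteq> 0" using a(2) by auto
  moreover have "0 < l"
    using nullspace_inter_rowspace[of X a] a by (auto simp: l_def)
  ultimately show ?thesis using that ge by blast
qed

lemma finite_eigenvalues_symmetric:
  fixes A :: "real^'n^'n"
  assumes "transpose A = A"
  shows "finite {l. \<exists>v. v \<noteq> 0 \<and> A *v v = l *\<^sub>R v}"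
proof -
  define E where "E = {l. \<exists>v. v \<noteq> 0 \<and> A *v v = l *\<^sub>R v}"
  define f where "f l = (SOME v. v \<noteq> 0 \<and> A *v v = l *\<^sub>R v)" for l
  have f: "f l \<noteq> 0 \<and> A *v f l = l *\<^sub>R f l" if "l \<in> E" for l
  proof -
    from that obtain v where "v \<noteq> 0 \<and> A *v v = l *\<^sub>R v" by (auto simp: E_def)
    then show ?thesis unfolding f_def by (rule someI)
  qed
  have "inj_on f E"
    by (rule inj_onI) (metis f scaleR_cancel_right)
  moreover have "pairwise orthogonal (f ` E)"
  proof (rule pairwiseI, clarify)
    fix l k assume lk: "l \<in> E" "k \<in> E" "f l \<noteq> f k"
    have "l * inner (f l) (f k) = inner (A *v f l) (f k)" using f[OF lk(1)] by simp
    also have "\<dots> = inner (f l) (A *v f k)"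
      by (simp add: inner_matrix_vector_mult_transpose assms del: transpose_matrix_vector)
    also have "\<dots> = k * inner (f l) (f k)" using f[OF lk(2)] by simp
    finally show "orthogonal (f l) (f k)"
      using lk by (auto simp: orthogonal_def)
  qed
  moreover have "0 \<notin> f ` E" using f by fastforce
  ultimately have "finite (f ` E)"
    using pairwise_orthogonal_independent finiteI_independent by blast
  with \<open>inj_on f E\<close> show ?thesis
    using finite_imageD E_def by blast
qed

lemma sigma_min_pos_le_sqrt_eigenvalue:
  fixes X :: "real^'n^'m"
  assumes "0 < l" and "v \<noteq> 0" and "(transpose X ** X) *v v = l *\<^sub>R v"
  shows "0 < sigma_min X" and "sigma_min X \<le> sqrt l"
proof -
  define S where "S = {s. s > 0 \<and> (\<exists>v. v \<noteq> 0 \<and> (transpose X ** X) *v v = s\<^sup>2 *\<^sub>R v)}"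
  have "S \<subseteq> sqrt ` {l. \<exists>v. v \<noteq> 0 \<and> (transpose X ** X) *v v = l *\<^sub>R v}"
  proof
    fix s assume "s \<in> S"
    then show "s \<in> sqrt ` {l. \<exists>v. v \<noteq> 0 \<and> (transpose X ** X) *v v = l *\<^sub>R v}"
      by (intro image_eqI[of s sqrt "s\<^sup>2"]) (auto simp: S_def)
  qed
  then have "finite S"
    by (rule finite_subset) (simp add: finite_eigenvalues_symmetric matrix_transpose_mul)
  moreover have "sqrt l \<in> S" using assms by (auto simp: S_def)
  ultimately have "Min S \<in> S" and "Min S \<le> sqrt l" by (auto intro: Min_in)
  then show "0 < sigma_min X" and "sigma_min X \<le> sqrt l"
    by (simp_all add: sigma_min_def S_def)
qed

lemma sigma_min_rowspace:
  fixes X :: "real^'n^'m"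
  assumes "X \<noteq> 0"
  shows "0 < sigma_min X" and "\<And>v. v \<in> span (rows X) \<Longrightarrow> sigma_min X * norm v \<le> norm (X *v v)"
proof -
  obtain a l where "a \<noteq> 0" and eig: "(transpose X ** X) *v a = l *\<^sub>R a" and "0 < l"
    and ge: "\<And>v. v \<in> span (rows X) \<Longrightarrow> l * (norm v)\<^sup>2 \<le> (norm (X *v v))\<^sup>2"
    using rowspace_rayleigh_eigenpair[OF assms] by blast
  show "0 < sigma_min X"
    by (rule sigma_min_pos_le_sqrt_eigenvalue(1)[OF \<open>0 < l\<close> \<open>a \<noteq> 0\<close> eig])
  fix v assume "v \<in> span (rows X)"
  have "sigma_min X * norm v \<le> sqrt l * norm v"
    by (intro mult_right_mono sigma_min_pos_le_sqrt_eigenvalue(2)[OF \<open>0 < l\<close> \<open>a \<noteq> 0\<close> eig]) simp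
  also have "\<dots> \<le> norm (X *v v)"
  proof (rule power2_le_imp_le)
    show "(sqrt l * norm v)\<^sup>2 \<le> (norm (X *v v))\<^sup>2"
      using ge[OF \<open>v \<in> span (rows X)\<close>] \<open>0 < l\<close> by (simp add: power_mult_distrib)
  qed simp
  finally show "sigma_min X * norm v \<le> norm (X *v v)" .
qed

lemma sigma_min_mult_norm_le:
  fixes X :: "real^'n^'m" and Y :: "real^'m^'p" and Q :: "real^'k^'n"
  assumes "X \<noteq> 0"
  shows "sigma_min X * norm (Y ** X ** Q) \<le> norm (Y ** X) * norm (X ** Q)"
proof -
  have \<sigma>: "0 < sigma_min X" by (rule sigma_min_rowspace(1)[OF assms])
  have "norm (column j (Y ** X ** Q)) \<le> norm (Y ** X) / sigma_min X * norm (column j (X ** Q))" for j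
  proof -
    obtain v where "v \<in> span (rows X)" and v: "X *v v = X *v column j Q"
      using rowspace_preimage by blast
    have "sigma_min X * norm (column j (Y ** X ** Q)) = sigma_min X * norm ((Y ** X) *v v)"
      by (simp add: column_matrix_mult v matrix_vector_mul_assoc[symmetric])
    also have "\<dots> \<le> norm (Y ** X) * (sigma_min X * norm v)"
      using \<sigma> norm_matrix_vector_mult_le[of "Y ** X" v] by (simp add: algebra_simps mult_left_mono)
    also have "\<dots> \<le> norm (Y ** X) * norm (column j (X ** Q))"
      using sigma_min_rowspace(2)[OF assms \<open>v \<in> span (rows X)\<close>]
      by (simp add: column_matrix_mult v mult_left_mono)
    finally show ?thesis using \<sigma> by (simp add: field_simps)
  qed
  then have "norm (Y ** X ** Q) \<le> norm (Y ** X) / sigma_min X * norm (X ** Q)"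
    using \<sigma> by (intro norm_le_by_columns) auto
  then show ?thesis using \<sigma> by (simp add: field_simps)
qed

lemma norm_compl_proj_sandwich_le:
  fixes X Xt :: "real^'n^'m" and U :: "real^'r^'m" and V :: "real^'r^'n"
  assumes "X \<noteq> 0" and "Xt = U ** S ** transpose V"
    and "transpose U ** U = mat 1" and "transpose V ** V = mat 1"
  shows "sigma_min X * norm (compl_proj U ** X ** compl_proj V) \<le> (norm (X - Xt))\<^sup>2"
proof -
  have "compl_proj U ** Xt = 0"
    by (simp add: assms(2) matrix_mul_assoc compl_proj_mult_self[OF assms(3)])
  then have left: "compl_proj U ** X = compl_proj U ** (X - Xt)"
    by (simp add: matrix_diff_ldistrib)
  have "Xt ** compl_proj V = 0"
    by (simp add: assms(2) matrix_mul_assoc[symmetric] transpose_mult_compl_proj[OF assms(4)]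
        matrix_mult_zero_right)
  then have right: "X ** compl_proj V = (X - Xt) ** compl_proj V"
    by (simp add: matrix_diff_rdistrib)
  have "sigma_min X * norm (compl_proj U ** X ** compl_proj V)
      \<le> norm (compl_proj U ** X) * norm (X ** compl_proj V)"
    by (rule sigma_min_mult_norm_le[OF assms(1)])
  also have "\<dots> \<le> norm (X - Xt) * norm (X - Xt)"
    unfolding left right
    by (intro mult_mono norm_compl_proj_mult_le norm_mult_compl_proj_le assms(3,4)) simp_all
  finally show ?thesis by (simp add: power2_eq_square)
qed

section \<open>The weighted norm and the weighted projection\<close>

definition wroot :: "real^'m^'m \<Rightarrow> real^'n^'n \<Rightarrow> real^'n^'m \<Rightarrow> real^'n^'m" where
  "wroot L R Z = (\<chi> i j. (L $ i $ i) powr (1/8) * (R $ j $ j) powr (1/8) * Z $ i $ j)"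

lemma winner_entrywise:
  "winner L R Z Y
    = (\<Sum>i\<in>UNIV. \<Sum>j\<in>UNIV. (L $ i $ i) powr (1/4) * (R $ j $ j) powr (1/4) * Z $ i $ j * Y $ i $ j)"
  unfolding winner_def trace_def diag_powr_def matrix_matrix_mult_def transpose_def
  by (simp add: if_distrib if_distribR cong: if_cong)
    (subst sum.swap, simp add: algebra_simps)

lemma winner_eq_inner_wroot: "winner L R Z Y = inner (wroot L R Z) (wroot L R Y)"
proof -
  have "x powr (1/4) = x powr (1/8) * x powr (1/8)" for x :: real
    by (simp add: powr_add[symmetric])
  then show ?thesis
    unfolding winner_entrywise wroot_def inner_vec_def inner_real_def
    by (simp add: algebra_simps)
qed

lemma wnorm_eq_norm_wroot: "wnorm L R Z = norm (wroot L R Z)"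
  by (simp add: wnorm_def winner_eq_inner_wroot norm_eq_sqrt_inner)

lemma linear_wroot: "linear (wroot L R)"
  by (rule linearI) (simp_all add: wroot_def vec_eq_iff algebra_simps)

lemma inj_wroot:
  assumes "\<forall>i. L $ i $ i \<noteq> 0" and "\<forall>j. R $ j $ j \<noteq> 0"
  shows "inj (wroot L R)"
  by (rule injI) (use assms in \<open>simp add: wroot_def vec_eq_iff\<close>)

lemma wnorm_bounds:
  assumes "0 < e" and L_bounds: "\<And>i. L $ i $ i \<in> {e..m}"
    and R_bounds: "\<And>j. R $ j $ j \<in> {e..m}"
  shows "e powr (1/4) * norm Z \<le> wnorm L R Z" and "wnorm L R Z \<le> m powr (1/4) * norm Z"
proof -
  have quarter: "x powr (1/4) = x powr (1/8) * x powr (1/8)" for x :: real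
    by (simp add: powr_add[symmetric])
  have "0 \<le> L $ i $ i" "0 \<le> R $ j $ j" for i j
    using L_bounds[of i] R_bounds[of j] \<open>0 < e\<close> by auto
  have "e powr (1/4) \<le> \<bar>(L $ i $ i) powr (1/8) * (R $ j $ j) powr (1/8)\<bar>" for i j
    unfolding quarter[of e] using assms by (auto intro!: mult_mono powr_mono2)
  then show "e powr (1/4) * norm Z \<le> wnorm L R Z"
    unfolding wnorm_eq_norm_wroot wroot_def by (intro norm_entrywise_scale_ge) auto
  have "\<bar>(L $ i $ i) powr (1/8) * (R $ j $ j) powr (1/8)\<bar> \<le> m powr (1/4)" for i j
    unfolding quarter[of m] using assms \<open>0 \<le> L $ _ $ _\<close> \<open>0 \<le> R $ _ $ _\<close>
    by (auto intro!: mult_mono powr_mono2)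
  then show "wnorm L R Z \<le> m powr (1/4) * norm Z"
    unfolding wnorm_eq_norm_wroot wroot_def by (intro norm_entrywise_scale_le) auto
qed

lemma orthogonal_projection_pullback_ex1:
  fixes \<phi> :: "'a::real_vector \<Rightarrow> 'b::euclidean_space"
  assumes "linear \<phi>" and "inj \<phi>" and "subspace T"
  shows "\<exists>!y. y \<in> T \<and> (\<forall>w\<in>T. inner (\<phi> x - \<phi> y) (\<phi> w) = 0)"
proof -
  obtain p z where p: "p \<in> span (\<phi> ` T)" and z: "\<And>w. w \<in> span (\<phi> ` T) \<Longrightarrow> orthogonal z w"
    and decomp: "\<phi> x = p + z"
    using orthogonal_subspace_decomp_exists by blast
  have "span (\<phi> ` T) = \<phi> ` T"
    using linear_subspace_image[OF assms(1,3)] by simp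
  with p obtain y where "y \<in> T" and "\<phi> y = p" by auto
  with z decomp have "y \<in> T \<and> (\<forall>w\<in>T. inner (\<phi> x - \<phi> y) (\<phi> w) = 0)"
    by (simp add: orthogonal_def span_base)
  moreover have "y1 = y2"
    if y1: "y1 \<in> T \<and> (\<forall>w\<in>T. inner (\<phi> x - \<phi> y1) (\<phi> w) = 0)"
    and y2: "y2 \<in> T \<and> (\<forall>w\<in>T. inner (\<phi> x - \<phi> y2) (\<phi> w) = 0)" for y1 y2
  proof -
    have "y1 - y2 \<in> T" using y1 y2 assms(3) by (simp add: subspace_diff)
    then have "inner ((\<phi> x - \<phi> y2) - (\<phi> x - \<phi> y1)) (\<phi> (y1 - y2)) = 0"
      using y1 y2 by (simp add: inner_diff_left)
    then have "\<phi> (y1 - y2) = 0" by (simp add: linear_diff[OF assms(1)])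
    then show ?thesis
      using assms(2) linear_0[OF assms(1)] by (metis eq_iff_diff_eq_0 injD)
  qed
  ultimately show ?thesis by blast
qed

lemma norm_orthogonal_residual_le:
  fixes x y z :: "'a::real_inner"
  assumes "\<forall>w\<in>T. inner (x - y) w = 0" and "y - z \<in> T"
  shows "norm (x - y) \<le> norm (x - z)"
proof -
  have "orthogonal (x - y) (y - z)" using assms by (simp add: orthogonal_def)
  then have "(norm (x - z))\<^sup>2 = (norm (x - y))\<^sup>2 + (norm (y - z))\<^sup>2"
    using norm_add_Pythagorean by fastforce
  then show ?thesis by (simp add: power2_le_imp_le)
qed

lemma wproj_best_approximation:
  assumes "subspace T" and "\<forall>i. L $ i $ i \<noteq> 0" and "\<forall>j. R $ j $ j \<noteq> 0" and "Z \<in> T"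
  shows "wnorm L R (X - wproj L R T X) \<le> wnorm L R (X - Z)"
proof -
  let ?\<phi> = "wroot L R"
  have lin: "linear ?\<phi>" by (rule linear_wroot)
  have orth_iff: "winner L R (X - Y) W = inner (?\<phi> X - ?\<phi> Y) (?\<phi> W)" for Y W
    by (simp add: winner_eq_inner_wroot linear_diff[OF lin])
  have "\<exists>!Y. Y \<in> T \<and> (\<forall>W\<in>T. winner L R (X - Y) W = 0)"
    unfolding orth_iff using lin inj_wroot[OF assms(2,3)] assms(1)
    by (rule orthogonal_projection_pullback_ex1)
  then have "wproj L R T X \<in> T \<and> (\<forall>W\<in>T. winner L R (X - wproj L R T X) W = 0)"
    unfolding wproj_def by (rule theI')
  then have P: "wproj L R T X \<in> T" "\<forall>W\<in>T. inner (?\<phi> X - ?\<phi> (wproj L R T X)) (?\<phi> W) = 0"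
    by (simp_all add: orth_iff)
  have "norm (?\<phi> X - ?\<phi> (wproj L R T X)) \<le> norm (?\<phi> X - ?\<phi> Z)"
  proof (rule norm_orthogonal_residual_le)
    show "\<forall>w\<in>?\<phi> ` T. inner (?\<phi> X - ?\<phi> (wproj L R T X)) w = 0" using P(2) by blast
    show "?\<phi> (wproj L R T X) - ?\<phi> Z \<in> ?\<phi> ` T"
      using P(1) assms(1,4) by (auto simp: linear_diff[OF lin, symmetric] subspace_diff)
  qed
  then show ?thesis by (simp add: wnorm_eq_norm_wroot linear_diff[OF lin])
qed

section \<open>The tangent space and the weighted residual\<close>

lemma subspace_tangent_space: "subspace (tangent_space U V)"
  unfolding subspace_def tangent_space_def
proof (intro conjI ballI allI)
  show "0 \<in> {U ** transpose Q + P ** transpose V |P Q. True}"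
    by (auto intro!: exI[of _ 0] simp: vec_eq_iff matrix_matrix_mult_def transpose_def)
  fix c :: real and Y Z assume "Y \<in> {U ** transpose Q + P ** transpose V |P Q. True}"
    and "Z \<in> {U ** transpose Q + P ** transpose V |P Q. True}"
  then obtain P Q P' Q' where Y: "Y = U ** transpose Q + P ** transpose V"
    and Z: "Z = U ** transpose Q' + P' ** transpose V" by blast
  have "c *\<^sub>R Y = U ** transpose (c *\<^sub>R Q) + (c *\<^sub>R P) ** transpose V"
    by (simp add: Y transpose_scalar matrix_scalar_ac scalar_matrix_assoc[symmetric] scaleR_add_right)
  then show "c *\<^sub>R Y \<in> {U ** transpose Q + P ** transpose V |P Q. True}" by blast
  have "Y + Z = U ** transpose (Q + Q') + (P + P') ** transpose V"
    by (simp add: Y Z transpose_add matrix_add_ldistrib matrix_add_rdistrib algebra_simps)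
  then show "Y + Z \<in> {U ** transpose Q + P ** transpose V |P Q. True}" by blast
qed

lemma diff_compl_proj_sandwich_in_tangent_space:
  "X - compl_proj U ** X ** compl_proj V \<in> tangent_space U V"
proof -
  have "X - compl_proj U ** X ** compl_proj V
      = U ** transpose (transpose X ** U) + (compl_proj U ** X ** V) ** transpose V"
    by (simp add: compl_proj_def matrix_diff_ldistrib matrix_diff_rdistrib matrix_transpose_mul
        matrix_mul_assoc)
  then show ?thesis unfolding tangent_space_def by blast
qed

lemma wproj_tangent_space_residual_le:
  fixes X Xt :: "real^'n^'m" and U :: "real^'r^'m" and V :: "real^'r^'n"
  assumes "0 < e" and L_bounds: "\<And>i. L $ i $ i \<in> {e..m}"
    and R_bounds: "\<And>j. R $ j $ j \<in> {e..m}"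
    and "X \<noteq> 0" and "Xt = U ** S ** transpose V"
    and "transpose U ** U = mat 1" and "transpose V ** V = mat 1"
  shows "wnorm L R (X - wproj L R (tangent_space U V) X)
    \<le> m powr (1/4) / (sqrt e * sigma_min X) * (wnorm L R (X - Xt))\<^sup>2"
proof -
  define E where "E = compl_proj U ** X ** compl_proj V"
  have \<sigma>: "0 < sigma_min X" by (rule sigma_min_rowspace(1)[OF \<open>X \<noteq> 0\<close>])
  have "L $ i $ i \<noteq> 0" "R $ j $ j \<noteq> 0" for i j
    using L_bounds[of i] R_bounds[of j] \<open>0 < e\<close> by auto
  then have "wnorm L R (X - wproj L R (tangent_space U V) X) \<le> wnorm L R (X - (X - E))"
    unfolding E_def
    by (intro wproj_best_approximation subspace_tangent_space diff_compl_proj_sandwich_in_tangent_space) auto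
  also have "\<dots> \<le> m powr (1/4) * norm E"
    using wnorm_bounds(2)[OF assms(1-3)] by simp
  also have "\<dots> \<le> m powr (1/4) * ((norm (X - Xt))\<^sup>2 / sigma_min X)"
    using norm_compl_proj_sandwich_le[OF assms(4-7)] \<sigma>
    by (intro mult_left_mono) (simp_all add: E_def field_simps)
  also have "\<dots> \<le> m powr (1/4) * ((wnorm L R (X - Xt))\<^sup>2 / sqrt e / sigma_min X)"
  proof -
    have "(e powr (1/4) * norm (X - Xt))\<^sup>2 \<le> (wnorm L R (X - Xt))\<^sup>2"
      by (intro power_mono wnorm_bounds(1)[OF assms(1-3)]) simp
    moreover have "(e powr (1/4))\<^sup>2 = sqrt e"
      using \<open>0 < e\<close> by (simp add: powr_half_sqrt[symmetric] powr_powr flip: powr_realpow)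
    ultimately have "sqrt e * (norm (X - Xt))\<^sup>2 \<le> (wnorm L R (X - Xt))\<^sup>2"
      by (simp add: power_mult_distrib)
    then show ?thesis
      using \<sigma> \<open>0 < e\<close> by (intro mult_left_mono divide_right_mono) (simp_all add: field_simps)
  qed
  finally show ?thesis by (simp add: field_simps)
qed

lemma sqrt_div_le_powr_div:
  assumes "0 < \<nu>" and "\<nu> \<le> \<mu>"
  shows "sqrt \<mu> / \<nu> \<le> \<mu> powr (5/4) / \<nu> powr (7/4)"
proof -
  have "\<nu> powr (3/4) \<le> \<mu> powr (3/4)" using assms by (intro powr_mono2) auto
  then have "\<mu> powr (1/2) * \<nu> powr (3/4) \<le> \<mu> powr (1/2) * \<mu> powr (3/4)"
    by (intro mult_left_mono) auto
  also have "\<dots> = \<mu> powr (5/4)" by (simp add: powr_add[symmetric])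
  finally have "\<mu> powr (1/2) * \<nu> powr (3/4) / \<nu> powr (7/4) \<le> \<mu> powr (5/4) / \<nu> powr (7/4)"
    using assms by (intro divide_right_mono) auto
  moreover have "\<nu> powr (7/4) = \<nu> * \<nu> powr (3/4)"
    using assms by (simp add: powr_add[symmetric] powr_mult_base)
  moreover have "0 < \<nu> powr (3/4)" using assms by simp
  ultimately show ?thesis using assms by (simp add: powr_half_sqrt)
qed

lemma norm_row_le_vee_norm: "norm (row i G) \<le> vee_norm G"
  unfolding vee_norm_def by (rule max.coboundedI1) simp

lemma norm_column_le_vee_norm: "norm (column j G) \<le> vee_norm G"
  unfolding vee_norm_def by (rule max.coboundedI2) simp

lemma regularized_gram_diag_bounds:
  fixes G :: "real^'n^'m"
  shows "(eps *\<^sub>R mat 1 + mdiag (G ** transpose G)) $ i $ i \<in> {eps..eps + (vee_norm G)\<^sup>2}"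
    and "(eps *\<^sub>R mat 1 + mdiag (transpose G ** G)) $ j $ j \<in> {eps..eps + (vee_norm G)\<^sup>2}"
proof -
  have "mdiag (G ** transpose G) $ i $ i = (norm (row i G))\<^sup>2"
    and "mdiag (transpose G ** G) $ j $ j = (norm (column j G))\<^sup>2"
    by (simp_all add: mdiag_def matrix_matrix_mult_def transpose_def row_def column_def
        power2_norm_eq_inner inner_vec_def)
  then show "(eps *\<^sub>R mat 1 + mdiag (G ** transpose G)) $ i $ i \<in> {eps..eps + (vee_norm G)\<^sup>2}"
    and "(eps *\<^sub>R mat 1 + mdiag (transpose G ** G)) $ j $ j \<in> {eps..eps + (vee_norm G)\<^sup>2}"
    using power_mono[OF norm_row_le_vee_norm norm_ge_zero, of i G]
      power_mono[OF norm_column_le_vee_norm norm_ge_zero, of j G]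
    by (simp_all add: mat_def)
qed

theorem lemma3p7:
  fixes G X Xt :: "real^'n2^'n1"
    and U :: "real^'r^'n1" and S :: "real^'r^'r" and V :: "real^'r^'n2"
    and eps :: real
  assumes eps_pos: "eps > 0"
    and rank_X: "rank X = CARD('r)"
    and rank_Xt: "rank Xt = CARD('r)"
    and svd: "Xt = U ** S ** transpose V"
    and U_orth: "transpose U ** U = mat 1"
    and V_orth: "transpose V ** V = mat 1"
    and S_diag: "\<forall>i j. i \<noteq> j \<longrightarrow> S $ i $ j = 0"
    and S_pos: "\<forall>i. S $ i $ i > 0"
  shows "let L = eps *\<^sub>R mat 1 + mdiag (G ** transpose G);
             R = eps *\<^sub>R mat 1 + mdiag (transpose G ** G);
             \<nu> = eps powr (1/2);
             \<mu> = (eps + (vee_norm G)^2) powr (1/2)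
         in wnorm L R (X - wproj L R (tangent_space U V) X)
            \<le> \<mu> powr (5/4) / (\<nu> powr (7/4) * sigma_min X) * (wnorm L R (X - Xt))^2"
proof -
  define L where "L = eps *\<^sub>R mat 1 + mdiag (G ** transpose G)"
  define R where "R = eps *\<^sub>R mat 1 + mdiag (transpose G ** G)"
  define m where "m = eps + (vee_norm G)\<^sup>2"
  define \<nu> where "\<nu> = eps powr (1/2)"
  define \<mu> where "\<mu> = m powr (1/2)"
  have L_bounds: "L $ i $ i \<in> {eps..m}" for i
    unfolding L_def m_def by (rule regularized_gram_diag_bounds(1))
  have R_bounds: "R $ j $ j \<in> {eps..m}" for j
    unfolding R_def m_def by (rule regularized_gram_diag_bounds(2))
  have "X \<noteq> 0" using rank_X by auto
  then have \<sigma>: "0 < sigma_min X" by (rule sigma_min_rowspace(1))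
  have "m powr (1/4) = sqrt \<mu>" and "sqrt eps = \<nu>"
    using eps_pos by (simp_all add: \<nu>_def \<mu>_def powr_half_sqrt[symmetric] powr_powr)
  then have "wnorm L R (X - wproj L R (tangent_space U V) X)
      \<le> sqrt \<mu> / \<nu> * ((wnorm L R (X - Xt))\<^sup>2 / sigma_min X)"
    using wproj_tangent_space_residual_le[OF eps_pos L_bounds R_bounds \<open>X \<noteq> 0\<close> svd U_orth V_orth]
    by simp
  also have "\<dots> \<le> \<mu> powr (5/4) / \<nu> powr (7/4) * ((wnorm L R (X - Xt))\<^sup>2 / sigma_min X)"
    using \<sigma> eps_pos
    by (intro mult_right_mono sqrt_div_le_powr_div) (simp_all add: \<nu>_def \<mu>_def m_def powr_mono2)
  finally show ?thesis by (simp add: L_def R_def \<nu>_def \<mu>_def m_def)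
qed

end
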